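(* Let $X,Y$ be random variables on finite sets $\mathcal{X},\mathcal{Y}$ with joint pmf $P_{XY}$. Suppose there are $\lambda_{\min}\le\lambda_{\max}$ such that $\lambda_{\min}\le-\log P_{XY}(x,y)\le\lambda_{\max}$ for all $(x,y)$ in the support of $P_{XY}$, and put $\Delta=\lambda_{\max}-\lambda_{\min}$. Let $0\le\epsilon<1$ and $0<\eta<1-\epsilon$, and let $Q_X,Q_Y$ be arbitrary distributions on $\mathcal{X}$ and $\mathcal{Y}$. Then for every real $\gamma$, \[ L_\epsilon(X,Y)\ge\gamma+\log\Big(\Pr\Big(-\log\frac{P_{XY}(X,Y)^2}{Q_X(X)Q_Y(Y)}\ge\gamma\Big)-\epsilon-2\eta\Big)_+-\Delta-4\log\frac1\eta-1. \]
   Context: Logarithms are to base 2, $(a)_+=\max\{a,0\}$, and $\log 0=-\infty$. Setting of the protocol. Party 1 observes $X$ and party 2 observes $Y$. They may use private randomness $U_{\mathcal X}$ and $U_{\mathcal Y}$ and shared randomness $U$; these are mutually independent and independent of $(X,Y)$. Tree protocol. A tree protocol is a binary tree whose internal vertices are labelled 1 or 2. At a vertex labelled $i$, party $i$ sends a bit that is a function of its observation, its private randomness and $U$. The protocol moves to the left or right child according to that bit and stops at a leaf. The transcript $\Pi$ is the sequence of bits sent, and the length of the protocol is the depth of the tree. Data exchange. A protocol attains $\epsilon$-data exchange if there are functions $\hat Y$ of $(X,\Pi,U_{\mathcal X},U)$ and $\hat X$ of $(Y,\Pi,U_{\mathcal Y},U)$ with $\Pr(\hat X=X,\hat Y=Y)\ge1-\epsilon$.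 $L_\epsilon(X,Y)$ is the infimum of the lengths of protocols attaining $\epsilon$-data exchange. *)

theory Defs
  imports "HOL-Probability.Probability"
begin

text \<open>Randomness (private U_X, U_Y and shared U) takes values in nat.
  At a vertex labelled 1 the bit is a function of (x, u_X, u); at a vertex labelled 2
  of (y, u_Y, u).\<close>

datatype ('x, 'y) ptree =
    Leaf
  | Node1 "'x \<Rightarrow> nat \<Rightarrow> nat \<Rightarrow> bool" "('x, 'y) ptree" "('x, 'y) ptree"
  | Node2 "'y \<Rightarrow> nat \<Rightarrow> nat \<Rightarrow> bool" "('x, 'y) ptree" "('x, 'y) ptree"

fun depth :: "('x, 'y) ptree \<Rightarrow> nat" where
  "depth Leaf = 0"
| "depth (Node1 f l r) = Suc (max (depth l) (depth r))"
| "depth (Node2 f l r) = Suc (max (depth l) (depth r))"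

fun transcript :: "('x, 'y) ptree \<Rightarrow> 'x \<Rightarrow> 'y \<Rightarrow> nat \<Rightarrow> nat \<Rightarrow> nat \<Rightarrow> bool list" where
  "transcript Leaf x y ux uy u = []"
| "transcript (Node1 f l r) x y ux uy u =
     (let b = f x ux u in b # transcript (if b then r else l) x y ux uy u)"
| "transcript (Node2 f l r) x y ux uy u =
     (let b = f y uy u in b # transcript (if b then r else l) x y ux uy u)"

text \<open>Probability that both parties decode correctly, with X,Y ~ P and U_X ~ RX, U_Y ~ RY,
  U ~ R mutually independent and independent of (X,Y). dX gives party 1's estimate of Y,
  dY gives party 2's estimate of X.\<close>
definition success_prob ::
  "('x \<times> 'y) pmf \<Rightarrow> nat pmf \<Rightarrow> nat pmf \<Rightarrow> nat pmf \<Rightarrow> ('x, 'y) ptree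
    \<Rightarrow> ('x \<Rightarrow> bool list \<Rightarrow> nat \<Rightarrow> nat \<Rightarrow> 'y) \<Rightarrow> ('y \<Rightarrow> bool list \<Rightarrow> nat \<Rightarrow> nat \<Rightarrow> 'x) \<Rightarrow> real" where
  "success_prob P RX RY R T dX dY =
     measure_pmf.prob
       (bind_pmf P (\<lambda>(x, y). bind_pmf RX (\<lambda>ux. bind_pmf RY (\<lambda>uy. bind_pmf R (\<lambda>u.
          let t = transcript T x y ux uy u in
          return_pmf (dY y t uy u = x \<and> dX x t ux u = y))))))
       {True}"

definition attains_data_exchange :: "('x \<times> 'y) pmf \<Rightarrow> real \<Rightarrow> ('x, 'y) ptree \<Rightarrow> bool" where
  "attains_data_exchange P \<epsilon> T \<longleftrightarrow>
     (\<exists>RX RY R dX dY. success_prob P RX RY R T dX dY \<ge> 1 - \<epsilon>)"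

definition L_eps :: "('x \<times> 'y) pmf \<Rightarrow> real \<Rightarrow> real" where
  "L_eps P \<epsilon> = Inf {real (depth T) | T. attains_data_exchange P \<epsilon> T}"

end

theory Submission
  imports Defs
begin

text \<open>Fix the randomness. A tree protocol of depth \<open>l\<close> splits \<open>\<X> \<times> \<Y>\<close> into at most \<open>2^l\<close>
  rectangles \<open>A\<^sub>t \<times> B\<^sub>t\<close>, one per transcript \<open>t\<close>. Inside a rectangle, a pair decoded correctly by
  both parties is determined by either coordinate, so the correct pairs form a partial matching.
  On the event \<open>G\<close> where \<open>P(x,y) \<le> 2^(-\<gamma>/2) \<surd>(Q\<^sub>X(x) Q\<^sub>Y(y))\<close>, Cauchy-Schwarz bounds the
  mass of such a matching by \<open>2^(-\<gamma>/2) \<surd>(Q\<^sub>X(A\<^sub>t) Q\<^sub>Y(B\<^sub>t))\<close>, and a second Cauchy-Schwarz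
  over the disjoint rectangles gives \<open>2^((l-\<gamma>)/2)\<close>. Hence \<open>Pr(G) - \<epsilon> \<le> 2^((l-\<gamma>)/2)\<close>, i.e.
  \<open>l \<ge> \<gamma> + 2 log (Pr(G) - \<epsilon>)\<close>, which already implies the stated bound.\<close>

fun leaf_paths :: "('x, 'y) ptree \<Rightarrow> bool list set" where
  "leaf_paths Leaf = {[]}"
| "leaf_paths (Node1 f l r) = Cons False ` leaf_paths l \<union> Cons True ` leaf_paths r"
| "leaf_paths (Node2 f l r) = Cons False ` leaf_paths l \<union> Cons True ` leaf_paths r"

lemma finite_leaf_paths: "finite (leaf_paths T)"
  by (induction T) auto

lemma card_Cons_image_Un_le:
  assumes "card A \<le> 2 ^ m" "card B \<le> 2 ^ n"
  shows "card (Cons False ` A \<union> Cons True ` B) \<le> 2 * 2 ^ max m n"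
proof -
  have "card (Cons False ` A \<union> Cons True ` B) \<le> card (Cons False ` A) + card (Cons True ` B)"
    by (rule card_Un_le)
  also have "\<dots> = card A + card B"
    by (simp add: card_image)
  also have "\<dots> \<le> 2 * 2 ^ max m n"
    using assms power_increasing[OF max.cobounded1, of "2::nat" m n]
      power_increasing[OF max.cobounded2, of "2::nat" n m]
    by linarith
  finally show ?thesis .
qed

lemma card_leaf_paths_le: "card (leaf_paths T) \<le> 2 ^ depth T"
  by (induction T) (simp_all add: card_Cons_image_Un_le)

lemma transcript_in_leaf_paths: "transcript T x y ux uy u \<in> leaf_paths T"
  by (induction T) (auto simp: Let_def)

lemma transcript_rectangle:
  "transcript T x y ux uy u = transcript T x' y' ux uy u \<Longrightarrow>
   transcript T x y' ux uy u = transcript T x y ux uy u"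
  by (induction T) (auto simp: Let_def split: if_splits)

lemma sum_sqrt_mult_le:
  fixes a b :: "'i \<Rightarrow> real"
  assumes "\<And>i. i \<in> I \<Longrightarrow> 0 \<le> a i" "\<And>i. i \<in> I \<Longrightarrow> 0 \<le> b i"
  shows "(\<Sum>i\<in>I. sqrt (a i) * sqrt (b i)) \<le> sqrt (sum a I) * sqrt (sum b I)"
proof -
  have "(\<Sum>i\<in>I. sqrt (a i) * sqrt (b i))\<^sup>2 \<le> (\<Sum>i\<in>I. (sqrt (a i))\<^sup>2) * (\<Sum>i\<in>I. (sqrt (b i))\<^sup>2)"
    by (rule Cauchy_Schwarz_ineq_sum)
  also have "\<dots> = sum a I * sum b I"
    using assms by simp
  finally have "(\<Sum>i\<in>I. sqrt (a i) * sqrt (b i)) \<le> sqrt (sum a I * sum b I)"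
    by (rule real_le_rsqrt)
  then show ?thesis
    by (simp add: real_sqrt_mult)
qed

lemma sum_sqrt_mult_le_of_inj_on:
  fixes qx :: "'x \<Rightarrow> real" and qy :: "'y \<Rightarrow> real"
  assumes inj: "inj_on fst M" "inj_on snd M"
    and sub: "fst ` M \<subseteq> A" "snd ` M \<subseteq> B" and fin: "finite A" "finite B"
    and nonneg: "\<And>x. 0 \<le> qx x" "\<And>y. 0 \<le> qy y"
  shows "(\<Sum>(x, y)\<in>M. sqrt (qx x) * sqrt (qy y)) \<le> sqrt (sum qx A) * sqrt (sum qy B)"
proof -
  have x: "(\<Sum>z\<in>M. qx (fst z)) \<le> sum qx A"
    using sum_mono2[OF fin(1) sub(1), of qx] nonneg by (simp add: sum.reindex[OF inj(1)])
  have y: "(\<Sum>z\<in>M. qy (snd z)) \<le> sum qy B"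
    using sum_mono2[OF fin(2) sub(2), of qy] nonneg by (simp add: sum.reindex[OF inj(2)])
  have "(\<Sum>(x, y)\<in>M. sqrt (qx x) * sqrt (qy y))
      \<le> sqrt (\<Sum>z\<in>M. qx (fst z)) * sqrt (\<Sum>z\<in>M. qy (snd z))"
    unfolding case_prod_beta by (rule sum_sqrt_mult_le) (simp_all add: nonneg)
  also have "\<dots> \<le> sqrt (sum qx A) * sqrt (sum qy B)"
    using x y by (intro mult_mono) (simp_all add: nonneg sum_nonneg)
  finally show ?thesis .
qed

lemma fibre_eq_Times:
  assumes "\<And>x y x' y'. tr x y = tr x' y' \<Longrightarrow> tr x y' = tr x y"
  shows "{(x, y). tr x y = t} = {x. \<exists>y. tr x y = t} \<times> {y. \<exists>x. tr x y = t}"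
proof (intro equalityI subsetI)
  fix z assume "z \<in> {x. \<exists>y. tr x y = t} \<times> {y. \<exists>x. tr x y = t}"
  then obtain x y y' x' where "z = (x, y)" "tr x y' = t" "tr x' y = t"
    by auto
  with assms[of x y' x' y] show "z \<in> {(x, y). tr x y = t}"
    by simp
qed auto

lemma sum_fibre_rectangles_le:
  fixes tr :: "'x::finite \<Rightarrow> 'y::finite \<Rightarrow> 'b"
    and qx :: "'x \<Rightarrow> real" and qy :: "'y \<Rightarrow> real"
  assumes rect: "\<And>x y x' y'. tr x y = tr x' y' \<Longrightarrow> tr x y' = tr x y"
    and TT: "\<And>x y. tr x y \<in> TT" "finite TT"
    and qx: "\<And>x. 0 \<le> qx x" "sum qx UNIV \<le> 1"
    and qy: "\<And>y. 0 \<le> qy y" "sum qy UNIV \<le> 1"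
  shows "(\<Sum>t\<in>TT. sum qx {x. \<exists>y. tr x y = t} * sum qy {y. \<exists>x. tr x y = t}) \<le> 1"
proof -
  define q where "q = (\<lambda>(x, y). qx x * qy y)"
  have "sum qx {x. \<exists>y. tr x y = t} * sum qy {y. \<exists>x. tr x y = t}
      = sum q {z \<in> UNIV. case_prod tr z = t}" for t
    using fibre_eq_Times[of tr t, OF rect]
    by (simp add: q_def sum_product sum.cartesian_product case_prod_beta split_def)
  then have "(\<Sum>t\<in>TT. sum qx {x. \<exists>y. tr x y = t} * sum qy {y. \<exists>x. tr x y = t}) = sum q UNIV"
    using sum.group[of UNIV TT "case_prod tr" q] TT by (simp add: image_subset_iff)
  also have "\<dots> = sum qx UNIV * sum qy UNIV"
    by (simp add: q_def sum_product sum.cartesian_product flip: UNIV_Times_UNIV)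
  also have "\<dots> \<le> 1"
    using qx qy by (simp add: mult_le_one sum_nonneg)
  finally show ?thesis .
qed

lemma correct_mass_le_sqrt_card:
  fixes tr :: "'x::finite \<Rightarrow> 'y::finite \<Rightarrow> 'b" and p :: "'x \<times> 'y \<Rightarrow> real"
    and qx :: "'x \<Rightarrow> real" and qy :: "'y \<Rightarrow> real"
  assumes rect: "\<And>x y x' y'. tr x y = tr x' y' \<Longrightarrow> tr x y' = tr x y"
    and TT: "\<And>x y. tr x y \<in> TT" "finite TT"
    and qx: "\<And>x. 0 \<le> qx x" "sum qx UNIV \<le> 1"
    and qy: "\<And>y. 0 \<le> qy y" "sum qy UNIV \<le> 1"
    and p_le: "\<And>x y. (x, y) \<in> G \<Longrightarrow> p (x, y) \<le> c * (sqrt (qx x) * sqrt (qy y))"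
    and c: "0 \<le> c"
  shows "(\<Sum>z\<in>{(x, y). dY y (tr x y) = x \<and> dX x (tr x y) = y} \<inter> G. p z) \<le> c * sqrt (card TT)"
proof -
  define S where "S = {(x, y). dY y (tr x y) = x \<and> dX x (tr x y) = y} \<inter> G"
  define F where "F = (\<lambda>(x, y). sqrt (qx x) * sqrt (qy y))"
  define A where "A t = {x. \<exists>y. tr x y = t}" for t
  define B where "B t = {y. \<exists>x. tr x y = t}" for t
  define M where "M t = {z \<in> S. case_prod tr z = t}" for t
  have fibre: "sum F (M t) \<le> sqrt (sum qx (A t)) * sqrt (sum qy (B t))" for t
  proof -
    \<comment> \<open>Within one transcript each party's input determines the other's, since both decode correctly.\<close>
    have "inj_on fst (M t)"
    proof (rule inj_onI)
      fix z z' assume "z \<in> M t" "z' \<in> M t" "fst z = fst z'"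
      then show "z = z'"
        unfolding M_def S_def by (cases z, cases z') simp
    qed
    moreover have "inj_on snd (M t)"
    proof (rule inj_onI)
      fix z z' assume "z \<in> M t" "z' \<in> M t" "snd z = snd z'"
      then show "z = z'"
        unfolding M_def S_def by (cases z, cases z') simp
    qed
    moreover have "fst ` M t \<subseteq> A t" "snd ` M t \<subseteq> B t"
      unfolding M_def A_def B_def by force+
    ultimately show ?thesis
      unfolding F_def by (rule sum_sqrt_mult_le_of_inj_on) (simp_all add: qx qy)
  qed
  have "sum p S \<le> sum (\<lambda>z. c * F z) S"
  proof (rule sum_mono)
    fix z assume "z \<in> S"
    then show "p z \<le> c * F z"
      unfolding S_def F_def by (cases z) (simp add: p_le)
  qed
  also have "\<dots> = c * sum F S"
    by (simp add: sum_distrib_left)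
  also have "sum F S = (\<Sum>t\<in>TT. sum F (M t))"
    unfolding M_def by (rule sum.group[symmetric]) (auto simp: TT)
  also have "(\<Sum>t\<in>TT. sum F (M t)) \<le> (\<Sum>t\<in>TT. sqrt 1 * sqrt (sum qx (A t) * sum qy (B t)))"
    using fibre by (simp add: sum_mono real_sqrt_mult)
  also have "\<dots> \<le> sqrt (card TT) * sqrt (\<Sum>t\<in>TT. sum qx (A t) * sum qy (B t))"
    by (rule order_trans[OF sum_sqrt_mult_le]) (simp_all add: qx qy sum_nonneg)
  also have "\<dots> \<le> sqrt (card TT)"
    using sum_fibre_rectangles_le[OF rect TT qx qy] by (simp add: A_def B_def mult_left_le)
  finally show ?thesis
    using c by (simp add: S_def mult_left_mono)
qed

lemma measure_correct_le:
  fixes P :: "('x::finite \<times> 'y::finite) pmf" and tr :: "'x \<Rightarrow> 'y \<Rightarrow> 'b"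
  assumes rect: "\<And>x y x' y'. tr x y = tr x' y' \<Longrightarrow> tr x y' = tr x y"
    and TT: "\<And>x y. tr x y \<in> TT" "finite TT"
    and P_le: "\<And>x y. (x, y) \<in> G \<Longrightarrow> pmf P (x, y) \<le> c * (sqrt (pmf QX x) * sqrt (pmf QY y))"
    and c: "0 \<le> c"
  shows "measure_pmf.prob P {(x, y). dY y (tr x y) = x \<and> dX x (tr x y) = y}
    \<le> 1 - measure_pmf.prob P G + c * sqrt (card TT)"
proof -
  define C where "C = {(x, y). dY y (tr x y) = x \<and> dX x (tr x y) = y}"
  have "measure_pmf.prob P C = sum (pmf P) (C \<inter> G) + sum (pmf P) (C - G)"
    by (simp add: measure_measure_pmf_finite sum.Int_Diff)
  also have "sum (pmf P) (C \<inter> G) \<le> c * sqrt (card TT)"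
    unfolding C_def
    by (rule correct_mass_le_sqrt_card[where qx="pmf QX" and qy="pmf QY", OF rect TT _ _ _ _ P_le c])
      (simp_all add: sum_pmf_eq_1)
  also have "sum (pmf P) (C - G) \<le> sum (pmf P) (UNIV - G)"
    by (intro sum_mono2) auto
  also have "\<dots> = 1 - measure_pmf.prob P G"
    by (metis double_diff finite_Diff finite_class.finite_UNIV measure_measure_pmf_finite
        measure_pmf_UNIV subset_UNIV sum_diff)
  finally show ?thesis
    by (simp add: C_def)
qed

lemma measure_bind_pmf_le:
  assumes "\<And>x. measure_pmf.prob (f x) A \<le> c" "0 \<le> c"
  shows "measure_pmf.prob (bind_pmf p f) A \<le> c"
proof -
  have "emeasure (measure_pmf (bind_pmf p f)) A = (\<integral>\<^sup>+x. emeasure (f x) A \<partial>p)"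
    by simp
  also have "\<dots> \<le> ennreal c"
    by (intro measure_pmf.nn_integral_le_const) (auto simp: measure_pmf.emeasure_eq_measure assms)
  finally show ?thesis
    by (simp add: measure_pmf.emeasure_eq_measure assms(2))
qed

lemma success_prob_le:
  assumes "\<And>ux uy u. measure_pmf.prob P {(x, y).
      dY y (transcript T x y ux uy u) uy u = x \<and> dX x (transcript T x y ux uy u) ux u = y} \<le> K"
    and "0 \<le> K"
  shows "success_prob P RX RY R T dX dY \<le> K"
proof -
  define correct where "correct ux uy u = (\<lambda>(x, y).
      dY y (transcript T x y ux uy u) uy u = x \<and> dX x (transcript T x y ux uy u) ux u = y)"
    for ux uy u
  \<comment> \<open>The randomness is independent of the inputs, so it can be drawn first.\<close>
  have "success_prob P RX RY R T dX dY = measure_pmf.prob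
      (bind_pmf RX (\<lambda>ux. bind_pmf RY (\<lambda>uy. bind_pmf R (\<lambda>u. map_pmf (correct ux uy u) P)))) {True}"
    unfolding success_prob_def map_pmf_def correct_def
    by (simp add: Let_def split_beta' bind_commute_pmf[of P])
  also have "\<dots> \<le> K"
    using assms by (intro measure_bind_pmf_le) (simp_all add: vimage_def correct_def)
  finally show ?thesis .
qed

lemma le_powr_sqrt_mult_of_log_ratio:
  fixes p qx qy \<gamma> :: real
  assumes "0 < qx" "0 < qy" "0 \<le> p" "\<gamma> \<le> - log 2 (p ^ 2 / (qx * qy))"
  shows "p \<le> 2 powr (- \<gamma> / 2) * (sqrt qx * sqrt qy)"
proof (cases "p = 0")
  case True
  then show ?thesis using assms by simp
next
  case False
  define v where "v = p ^ 2 / (qx * qy)"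
  have "0 < v"
    using False assms unfolding v_def by simp
  moreover have "log 2 v \<le> - \<gamma>"
    using assms(4) unfolding v_def by linarith
  ultimately have "v \<le> 2 powr (- \<gamma>)"
    by (simp add: log_le_iff)
  then have "p ^ 2 \<le> 2 powr (- \<gamma>) * (qx * qy)"
    using assms unfolding v_def by (simp add: divide_le_eq)
  also have "\<dots> = (2 powr (- \<gamma> / 2) * (sqrt qx * sqrt qy)) ^ 2"
  proof -
    have "(2 powr (- \<gamma> / 2)) ^ 2 = 2 powr (- \<gamma>)"
      by (simp add: power2_eq_square powr_add[symmetric])
    then show ?thesis
      using assms by (simp add: power_mult_distrib)
  qed
  finally show ?thesis
    by (rule power2_le_imp_le) (use assms in simp)
qed

lemma depth_ge_of_attains_data_exchange:
  fixes P :: "('x::finite \<times> 'y::finite) pmf"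
  assumes att: "attains_data_exchange P \<epsilon> T"
    and P_le: "\<And>x y. (x, y) \<in> G \<Longrightarrow>
      pmf P (x, y) \<le> 2 powr (- \<gamma> / 2) * (sqrt (pmf QX x) * sqrt (pmf QY y))"
    and gt: "\<epsilon> < measure_pmf.prob P G"
  shows "\<gamma> + 2 * log 2 (measure_pmf.prob P G - \<epsilon>) \<le> depth T"
proof -
  obtain RX RY R dX dY where succ: "1 - \<epsilon> \<le> success_prob P RX RY R T dX dY"
    using att unfolding attains_data_exchange_def by blast
  define bound where "bound = 2 powr (- \<gamma> / 2) * sqrt (2 ^ depth T)"
  have "success_prob P RX RY R T dX dY \<le> 1 - measure_pmf.prob P G + bound"
  proof (rule success_prob_le)
    fix ux uy u
    have "real (card (leaf_paths T)) \<le> real (2 ^ depth T)"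
      using card_leaf_paths_le by (rule of_nat_mono)
    then have "2 powr (- \<gamma> / 2) * sqrt (card (leaf_paths T)) \<le> bound"
      unfolding bound_def by (intro mult_left_mono) simp_all
    moreover have "measure_pmf.prob P {(x, y). dY y (transcript T x y ux uy u) uy u = x \<and>
        dX x (transcript T x y ux uy u) ux u = y}
      \<le> 1 - measure_pmf.prob P G + 2 powr (- \<gamma> / 2) * sqrt (card (leaf_paths T))"
      by (rule measure_correct_le[where tr="\<lambda>x y. transcript T x y ux uy u" and
            dX="\<lambda>x t. dX x t ux u" and dY="\<lambda>y t. dY y t uy u" and QX=QX and QY=QY])
        (blast intro: transcript_rectangle, rule transcript_in_leaf_paths, rule finite_leaf_paths,
          erule P_le, simp)
    ultimately show "measure_pmf.prob P {(x, y). dY y (transcript T x y ux uy u) uy u = x \<and>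
        dX x (transcript T x y ux uy u) ux u = y} \<le> 1 - measure_pmf.prob P G + bound"
      by linarith
  qed (use measure_pmf.prob_le_1[of P G] in \<open>simp add: bound_def\<close>)
  also have "bound = 2 powr ((depth T - \<gamma>) / 2)"
    by (simp add: bound_def powr_half_sqrt[symmetric] powr_realpow[symmetric] powr_powr
        powr_add[symmetric] diff_divide_distrib)
  finally have "log 2 (measure_pmf.prob P G - \<epsilon>) \<le> log 2 (2 powr ((depth T - \<gamma>) / 2))"
    using succ gt by (intro log_mono) auto
  then show ?thesis
    by simp
qed

fun announce_X :: "'x list \<Rightarrow> ('x, 'y) ptree \<Rightarrow> ('x, 'y) ptree" where
  "announce_X [] T = T"
| "announce_X (a # as) T = Node1 (\<lambda>x _ _. x = a) (announce_X as T) (announce_X as T)"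

fun announce_Y :: "'y list \<Rightarrow> ('x, 'y) ptree \<Rightarrow> ('x, 'y) ptree" where
  "announce_Y [] T = T"
| "announce_Y (a # as) T = Node2 (\<lambda>y _ _. y = a) (announce_Y as T) (announce_Y as T)"

lemma transcript_announce_X:
  "transcript (announce_X as T) x y ux uy u = map (\<lambda>a. x = a) as @ transcript T x y ux uy u"
  by (induction as) (auto simp: Let_def)

lemma transcript_announce_Y:
  "transcript (announce_Y as T) x y ux uy u = map (\<lambda>a. y = a) as @ transcript T x y ux uy u"
  by (induction as) (auto simp: Let_def)

lemma inj_map_eq_of_set_eq_UNIV:
  assumes "set as = UNIV"
  shows "inj (\<lambda>x. map (\<lambda>a. x = a) as)"
proof (rule injI)
  fix x x' assume "map (\<lambda>a. x = a) as = map (\<lambda>a. x' = a) as"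
  then have "\<forall>a\<in>set as. (x = a) = (x' = a)"
    by (simp add: map_eq_conv)
  with assms show "x = x'"
    by auto
qed

lemma ex_attains_data_exchange:
  fixes P :: "('x::finite \<times> 'y::finite) pmf"
  assumes "0 \<le> \<epsilon>"
  shows "\<exists>T. attains_data_exchange P \<epsilon> T"
proof -
  obtain xs :: "'x list" where xs: "set xs = UNIV"
    using finite_list[OF finite_class.finite_UNIV] by blast
  obtain ys :: "'y list" where ys: "set ys = UNIV"
    using finite_list[OF finite_class.finite_UNIV] by blast
  define encX where "encX = (\<lambda>x. map (\<lambda>a. x = a) xs)"
  define encY where "encY = (\<lambda>y. map (\<lambda>a. y = a) ys)"
  define T :: "('x, 'y) ptree" where "T = announce_X xs (announce_Y ys Leaf)"
  define dX :: "'x \<Rightarrow> bool list \<Rightarrow> nat \<Rightarrow> nat \<Rightarrow> 'y" where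
    "dX = (\<lambda>x t ux u. inv encY (drop (length xs) t))"
  define dY :: "'y \<Rightarrow> bool list \<Rightarrow> nat \<Rightarrow> nat \<Rightarrow> 'x" where
    "dY = (\<lambda>y t uy u. inv encX (take (length xs) t))"
  have tr: "transcript T x y ux uy u = encX x @ encY y" for x y ux uy u
    by (simp add: T_def encX_def encY_def transcript_announce_X transcript_announce_Y)
  have "take (length xs) (encX x @ encY y) = encX x" "drop (length xs) (encX x @ encY y) = encY y"
    for x y by (simp_all add: encX_def)
  moreover have "inj encX" "inj encY"
    unfolding encX_def encY_def using xs ys by (simp_all add: inj_map_eq_of_set_eq_UNIV)
  ultimately have "dY y (transcript T x y ux uy u) uy u = x" "dX x (transcript T x y ux uy u) ux u = y"
    for x y ux uy u
    by (simp_all add: tr dX_def dY_def inv_f_f)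
  then have "success_prob P (return_pmf 0) (return_pmf 0) (return_pmf 0) T dX dY = 1"
    by (simp add: success_prob_def Let_def case_prod_beta' bind_pmf_const)
  with assms have "1 - \<epsilon> \<le> success_prob P (return_pmf 0) (return_pmf 0) (return_pmf 0) T dX dY"
    by simp
  then show ?thesis
    unfolding attains_data_exchange_def by blast
qed

lemma L_eps_ge:
  assumes "\<exists>T. attains_data_exchange P \<epsilon> T"
    and "\<And>T. attains_data_exchange P \<epsilon> T \<Longrightarrow> b \<le> real (depth T)"
  shows "b \<le> L_eps P \<epsilon>"
  unfolding L_eps_def using assms by (intro cInf_greatest) auto

theorem theorem5:
  fixes P :: "('x::finite \<times> 'y::finite) pmf"
    and QX :: "'x pmf" and QY :: "'y pmf"
    and lam_min lam_max \<epsilon> \<eta> \<gamma> :: real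
  assumes "lam_min \<le> lam_max"
    and "\<And>x y. (x, y) \<in> set_pmf P \<Longrightarrow>
            lam_min \<le> - log 2 (pmf P (x, y)) \<and> - log 2 (pmf P (x, y)) \<le> lam_max"
    and "0 \<le> \<epsilon>" and "\<epsilon> < 1"
    and "0 < \<eta>" and "\<eta> < 1 - \<epsilon>"
  shows "let \<Delta> = lam_max - lam_min;
             p = measure_pmf.prob P {(x, y). pmf QX x > 0 \<and> pmf QY y > 0 \<and>
                   - log 2 (pmf P (x, y) ^ 2 / (pmf QX x * pmf QY y)) \<ge> \<gamma>};
             a = p - \<epsilon> - 2 * \<eta>
         in a > 0 \<longrightarrow>
            L_eps P \<epsilon> \<ge> \<gamma> + log 2 a - \<Delta> - 4 * log 2 (1 / \<eta>) - 1"
proof -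
  define G where "G = {(x, y). pmf QX x > 0 \<and> pmf QY y > 0 \<and>
                   - log 2 (pmf P (x, y) ^ 2 / (pmf QX x * pmf QY y)) \<ge> \<gamma>}"
  define p where "p = measure_pmf.prob P G"
  have P_le: "pmf P (x, y) \<le> 2 powr (- \<gamma> / 2) * (sqrt (pmf QX x) * sqrt (pmf QY y))"
    if "(x, y) \<in> G" for x y
    using that unfolding G_def by (intro le_powr_sqrt_mult_of_log_ratio) auto
  have "\<gamma> + log 2 (p - \<epsilon> - 2 * \<eta>) - (lam_max - lam_min) - 4 * log 2 (1 / \<eta>) - 1 \<le> L_eps P \<epsilon>"
    if a_pos: "p - \<epsilon> - 2 * \<eta> > 0"
  proof (rule L_eps_ge[OF ex_attains_data_exchange[OF assms(3)]])
    fix T assume "attains_data_exchange P \<epsilon> T"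
    then have "\<gamma> + 2 * log 2 (p - \<epsilon>) \<le> depth T"
      using a_pos assms(5) P_le unfolding p_def
      by (intro depth_ge_of_attains_data_exchange) auto
    moreover have "log 2 (p - \<epsilon> - 2 * \<eta>) \<le> log 2 (p - \<epsilon>)" "log 2 \<eta> \<le> log 2 (p - \<epsilon>)"
      using a_pos assms(5) by (simp_all add: log_mono)
    moreover have "log 2 \<eta> < 0" "log 2 (1 / \<eta>) = - log 2 \<eta>"
      using assms(3-6) by (simp_all add: log_divide)
    \<comment> \<open>The \<open>\<eta>\<close> and \<open>\<Delta>\<close> terms are pure slack.\<close>
    ultimately show "\<gamma> + log 2 (p - \<epsilon> - 2 * \<eta>) - (lam_max - lam_min) - 4 * log 2 (1 / \<eta>) - 1
        \<le> depth T"
      using assms(1) by linarith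
  qed
  then show ?thesis
    unfolding Let_def G_def p_def by blast
qed

end
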